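(* Let $\varepsilon>0$ and let $\mathcal{P}$ be any bounded-derivative property of functions $f:[n]\to\mathbb{R}$. There is a distribution-free tester for $\mathcal{P}$ with proximity parameter $\varepsilon$ making $24\,\varepsilon^{-1}\log n$ queries.
   Context: A bounded-derivative property on $[n]$ is $\mathcal{P}=\{g:[n]\to\mathbb{R}: l(t)\le g(t+1)-g(t)\le u(t)\ \forall t\in[n-1]\}$ for some $l,u:[n-1]\to\mathbb{R}$ with $l(t)<u(t)$. A distribution-free tester does not know the distribution $\mathcal{D}$ on $[n]$ but may draw independent samples from it and query $f$ anywhere; for every $\mathcal{D}$ it must accept with probability $>2/3$ if $f\in\mathcal{P}$ and reject with probability $>2/3$ if $\min_{g\in\mathcal{P}}\Pr_{x\sim\mathcal{D}}[f(x)\ne g(x)]>\varepsilon$. *)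

theory Defs
  imports "HOL-Probability.Probability"
begin

text \<open>Domain [n] = {1..n}. Functions are total on nat; only their values on {1..n} matter.\<close>

definition bounded_derivative_property ::
  "nat \<Rightarrow> (nat \<Rightarrow> real) \<Rightarrow> (nat \<Rightarrow> real) \<Rightarrow> (nat \<Rightarrow> real) set" where
  "bounded_derivative_property n l u =
     {g. \<forall>t\<in>{1..n-1}. l t \<le> g (t+1) - g t \<and> g (t+1) - g t \<le> u t}"

definition in_prop :: "nat \<Rightarrow> (nat \<Rightarrow> real) set \<Rightarrow> (nat \<Rightarrow> real) \<Rightarrow> bool" where
  "in_prop n P f \<longleftrightarrow> (\<exists>g\<in>P. \<forall>x\<in>{1..n}. f x = g x)"

text \<open>f is eps-far from P w.r.t. D: every g in P disagrees with f on a set of D-mass > eps.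
  (Since D has finite support this is the same as min_g Pr[f \<noteq> g] > eps.)\<close>
definition far_from :: "nat pmf \<Rightarrow> (nat \<Rightarrow> real) set \<Rightarrow> real \<Rightarrow> (nat \<Rightarrow> real) \<Rightarrow> bool" where
  "far_from D P eps f \<longleftrightarrow> (\<forall>g\<in>P. measure_pmf.prob D {x. f x \<noteq> g x} > eps)"

datatype action = Sample | Query nat

type_synonym history = "(action \<times> nat \<times> real) list"

record tester =
  next_action :: "history \<Rightarrow> action pmf"
  decide :: "history \<Rightarrow> bool pmf"
  num_queries :: nat

fun run_tester :: "(history \<Rightarrow> action pmf) \<Rightarrow> nat pmf \<Rightarrow> (nat \<Rightarrow> real) \<Rightarrow> nat \<Rightarrow> history \<Rightarrow> history pmf" where
  "run_tester st D f 0 h = return_pmf h"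
| "run_tester st D f (Suc k) h =
     bind_pmf (st h) (\<lambda>a.
     bind_pmf (case a of Sample \<Rightarrow> D | Query y \<Rightarrow> return_pmf y) (\<lambda>x.
     run_tester st D f k (h @ [(a, x, f x)])))"

definition accept_prob :: "tester \<Rightarrow> nat pmf \<Rightarrow> (nat \<Rightarrow> real) \<Rightarrow> real" where
  "accept_prob T D f =
     measure_pmf.prob (bind_pmf (run_tester (next_action T) D f (num_queries T) []) (decide T)) {True}"

definition is_df_tester :: "nat \<Rightarrow> (nat \<Rightarrow> real) set \<Rightarrow> real \<Rightarrow> tester \<Rightarrow> bool" where
  "is_df_tester n P eps T \<longleftrightarrow>
     (\<forall>D f. set_pmf D \<subseteq> {1..n} \<longrightarrow>
        (in_prop n P f \<longrightarrow> accept_prob T D f > 2/3) \<and>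
        (far_from D P eps f \<longrightarrow> 1 - accept_prob T D f > 2/3))"

end

theory Submission
  imports Defs "HOL-Library.Log_Nat"
begin

text \<open>
Between two points x < y the property only constrains the difference of the values, to lie
between the sums of l and of u over [x, y); finitely many values that are pairwise compatible in
this sense extend to a member of the property. The tester samples x from D, queries the two
multiples of 2^j enclosing x at every scale 2^j \<le> n, and accepts iff all values it has seen
are pairwise compatible, so members of the property are always accepted. The sample points
whose queries are compatible with them are pairwise compatible among themselves: for x < y
there is a scale at which the multiple of 2^j just above x is the one just below y, and
compatibility chains through this common point. Hence f agrees on these good points with a
member of the property; if f is eps-far they carry mass below 1 - eps, and all of about 3/eps
samples land in them with probability at most (1 - eps)^(3/eps) < 1/3.
\<close>

section \<open>Compatible values and extension\<close>

definition compatible :: "(nat \<Rightarrow> real) \<Rightarrow> (nat \<Rightarrow> real) \<Rightarrow> nat \<Rightarrow> real \<Rightarrow> nat \<Rightarrow> real \<Rightarrow> bool" where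
  "compatible l u x v y w \<longleftrightarrow> sum l {x..<y} \<le> w - v \<and> w - v \<le> sum u {x..<y}"

lemma compatible_trans:
  assumes "x \<le> z" "z \<le> y" "compatible l u x a z b" "compatible l u z b y c"
  shows "compatible l u x a y c"
  using assms sum.atLeastLessThan_concat[of x z y l] sum.atLeastLessThan_concat[of x z y u]
  unfolding compatible_def by auto

lemma bounded_derivative_property_compatible:
  assumes g: "g \<in> bounded_derivative_property n l u" and "1 \<le> x" "x \<le> y" "y \<le> n"
  shows "compatible l u x (g x) y (g y)"
  using assms(3,4)
proof (induction y rule: dec_induct)
  case base
  then show ?case by (simp add: compatible_def)
next
  case (step k)
  have "k \<in> {1..n-1}" using step assms(2) by auto
  with g have "l k \<le> g (k+1) - g k \<and> g (k+1) - g k \<le> u k"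
    unfolding bounded_derivative_property_def by blast
  with step show ?case by (simp add: compatible_def sum.atLeastLessThan_Suc)
qed

lemma Max_diff_bounds:
  fixes F E :: "'a \<Rightarrow> real"
  assumes "finite S" "S \<noteq> {}" "\<forall>s\<in>S. a \<le> F s - E s \<and> F s - E s \<le> b"
  shows "a \<le> Max (F ` S) - Max (E ` S) \<and> Max (F ` S) - Max (E ` S) \<le> b"
proof -
  have "Max (E ` S) \<in> E ` S" "Max (F ` S) \<in> F ` S" using assms(1,2) by simp_all
  then obtain s0 s1 where s0: "s0 \<in> S" "E s0 = Max (E ` S)" and s1: "s1 \<in> S" "F s1 = Max (F ` S)"
    by (metis imageE)
  have "F s0 \<le> Max (F ` S)" "E s1 \<le> Max (E ` S)" using s0 s1 assms(1) by simp_all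
  with s0 s1 assms(3) show ?thesis by force
qed

text \<open>hs s is the least admissible function through (s, f s); compatibility keeps each of them
  below f at the other given points, so their maximum interpolates f.\<close>

lemma bounded_derivative_property_extension:
  assumes "finite S" "S \<subseteq> {1..n}" "\<forall>t\<in>{1..n-1}. l t \<le> u t"
    and comp: "\<forall>x\<in>S. \<forall>y\<in>S. x < y \<longrightarrow> compatible l u x (f x) y (f y)"
  shows "\<exists>g\<in>bounded_derivative_property n l u. \<forall>x\<in>S. f x = g x"
proof (cases "S = {}")
  case True
  have "(\<lambda>t. sum l {0..<t}) \<in> bounded_derivative_property n l u"
    using assms(3) unfolding bounded_derivative_property_def by auto
  with True show ?thesis by blast
next
  case False
  define hs where "hs s t = (if s \<le> t then f s + sum l {s..<t} else f s - sum u {t..<s})" for s t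
  define g where "g t = Max ((\<lambda>s. hs s t) ` S)" for t
  have "g \<in> bounded_derivative_property n l u"
    unfolding bounded_derivative_property_def
  proof (intro CollectI ballI)
    fix t assume t: "t \<in> {1..n-1}"
    have "\<forall>s\<in>S. l t \<le> hs s (t+1) - hs s t \<and> hs s (t+1) - hs s t \<le> u t"
      using assms(3) t
      by (auto simp: hs_def sum.atLeastLessThan_Suc sum.atLeast_Suc_lessThan not_le)
    then show "l t \<le> g (t+1) - g t \<and> g (t+1) - g t \<le> u t"
      unfolding g_def by (rule Max_diff_bounds[OF assms(1) False])
  qed
  moreover have "f x = g x" if x: "x \<in> S" for x
    unfolding g_def
  proof (rule Max_eqI[symmetric])
    show "finite ((\<lambda>s. hs s x) ` S)" using assms(1) by simp
    show "f x \<in> (\<lambda>s. hs s x) ` S" using x by (force simp: hs_def)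
    fix y assume "y \<in> (\<lambda>s. hs s x) ` S"
    then obtain s where s: "s \<in> S" "y = hs s x" by blast
    consider "s < x" | "s = x" | "x < s" by linarith
    then show "y \<le> f x"
    proof cases
      case 1
      with comp s(1) x show ?thesis by (fastforce simp: s(2) hs_def compatible_def)
    next
      case 2
      then show ?thesis by (simp add: s(2) hs_def)
    next
      case 3
      with comp s(1) x show ?thesis by (fastforce simp: s(2) hs_def compatible_def)
    qed
  qed
  ultimately show ?thesis by blast
qed

section \<open>Dyadic neighbours\<close>

definition dyadic_below :: "nat \<Rightarrow> nat \<Rightarrow> nat" where
  "dyadic_below j x = x div 2^j * 2^j"

definition dyadic_above :: "nat \<Rightarrow> nat \<Rightarrow> nat" where
  "dyadic_above j x = (x div 2^j + 1) * 2^j"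

lemma dyadic_below_le: "dyadic_below j x \<le> x"
  by (simp add: dyadic_below_def div_times_less_eq_dividend)

lemma less_dyadic_above: "x < dyadic_above j x"
proof -
  have "x = x div 2^j * 2^j + x mod 2^j" by (rule div_mult_mod_eq[symmetric])
  moreover have "x mod 2^j < (2::nat)^j" by simp
  moreover have "dyadic_above j x = x div 2^j * 2^j + 2^j" by (simp add: dyadic_above_def)
  ultimately show ?thesis by linarith
qed

text \<open>The scale is the least j at which x and y fall into the same block of length 2^(j+1).\<close>

lemma dyadic_above_eq_dyadic_below:
  fixes x y m :: nat
  assumes "x < y" "y < 2^m"
  shows "\<exists>j<m. dyadic_above j x = dyadic_below j y"
proof -
  let ?same = "\<lambda>j. x div 2^j = (y::nat) div 2^j"
  have "?same m" using assms by simp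
  define j' where "j' = (LEAST j. ?same j)"
  have same_j': "?same j'" unfolding j'_def by (rule LeastI[of ?same m]) fact
  have "j' \<le> m" unfolding j'_def by (rule Least_le[of ?same m]) fact
  have "j' \<noteq> 0" using same_j' assms(1) by (intro notI) simp
  then obtain j where j: "j' = Suc j" by (cases j') auto
  have "\<not> ?same j" using not_less_Least[of j ?same] j unfolding j'_def by simp
  moreover have "x div 2^j div 2 = y div 2^j div 2"
    using same_j' j by (metis div_mult2_eq power_Suc2)
  moreover have "x div 2^j \<le> y div 2^j" using assms(1) by (simp add: div_le_mono)
  moreover have "b = a + 1" if "a \<noteq> b" "a div 2 = b div 2" "a \<le> b" for a b :: nat
    using that by presburger
  ultimately have "y div 2^j = x div 2^j + 1" by blast
  then show ?thesis
    using j \<open>j' \<le> m\<close> by (intro exI[of _ j]) (simp add: dyadic_above_def dyadic_below_def)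
qed

section \<open>The tester\<close>

definition probe :: "nat \<Rightarrow> nat \<Rightarrow> nat" where
  "probe x i = (if even i then dyadic_below (i div 2) x else dyadic_above (i div 2) x)"

definition block :: "(nat \<Rightarrow> real) \<Rightarrow> nat \<Rightarrow> nat \<Rightarrow> history" where
  "block f m x = (Sample, x, f x) # map (\<lambda>i. (Query (probe x i), probe x i, f (probe x i))) [0..<2*m]"

text \<open>The history is cut into blocks of length 2m+1; the action at position r of the current
  block queries the (r-1)-st probe of the block's sample.\<close>

definition block_strategy :: "nat \<Rightarrow> history \<Rightarrow> action pmf" where
  "block_strategy m h = (let r = length h mod (2*m+1) in
     if r = 0 then return_pmf Sample
     else return_pmf (Query (probe (fst (snd (h ! (length h - r)))) (r - 1))))"

definition consistent_history :: "nat \<Rightarrow> (nat \<Rightarrow> real) \<Rightarrow> (nat \<Rightarrow> real) \<Rightarrow> history \<Rightarrow> bool" where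
  "consistent_history n l u h \<longleftrightarrow>
     (\<forall>(a, x, v)\<in>set h. \<forall>(b, y, w)\<in>set h.
        x \<in> {1..n} \<longrightarrow> y \<in> {1..n} \<longrightarrow> x < y \<longrightarrow> compatible l u x v y w)"

definition block_tester :: "nat \<Rightarrow> (nat \<Rightarrow> real) \<Rightarrow> (nat \<Rightarrow> real) \<Rightarrow> nat \<Rightarrow> nat \<Rightarrow> tester" where
  "block_tester n l u m k =
     \<lparr>next_action = block_strategy m,
      decide = (\<lambda>h. return_pmf (consistent_history n l u h)),
      num_queries = k * (2*m+1)\<rparr>"

lemma accept_prob_block_tester:
  "accept_prob (block_tester n l u m k) D f =
     measure_pmf.prob (run_tester (block_strategy m) D f (k * (2*m+1)) []) {h. consistent_history n l u h}"
  unfolding accept_prob_def block_tester_def by (simp add: map_pmf_def[symmetric] vimage_def)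

lemma run_tester_extends:
  assumes "h' \<in> set_pmf (run_tester st D f s h)"
  shows "\<exists>t. h' = h @ t \<and> (\<forall>(a, x, v)\<in>set t. v = f x)"
  using assms
proof (induction s arbitrary: h)
  case 0
  then show ?case by simp
next
  case (Suc s)
  then obtain a x where "h' \<in> set_pmf (run_tester st D f s (h @ [(a, x, f x)]))"
    by (auto split: action.splits) (metis action.exhaust)
  from Suc.IH[OF this] obtain t where "h' = (h @ [(a, x, f x)]) @ t" "\<forall>(a, x, v)\<in>set t. v = f x"
    by blast
  then show ?case by (intro exI[of _ "(a, x, f x) # t"]) auto
qed

lemma run_tester_block_suffix:
  assumes "length h mod (2*m+1) = 0" "i + d = 2*m"
  shows "run_tester (block_strategy m) D f (d + s) (h @ take (Suc i) (block f m x))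
           = run_tester (block_strategy m) D f s (h @ block f m x)"
  using assms(2)
proof (induction d arbitrary: i)
  case 0
  then show ?case by (simp add: block_def)
next
  case (Suc d)
  let ?h = "h @ take (Suc i) (block f m x)"
  have i: "i < 2*m" using Suc.prems by simp
  have len: "length ?h = length h + Suc i" using i by (simp add: block_def)
  have "(length h + Suc i) mod (2*m+1) = Suc i mod (2*m+1)"
    using assms(1) by (metis add_0 mod_add_left_eq)
  with len i have "length ?h mod (2*m+1) = Suc i" "length ?h - Suc i = length h" by simp_all
  moreover have "?h ! length h = (Sample, x, f x)" by (simp add: nth_append block_def)
  ultimately have "block_strategy m ?h = return_pmf (Query (probe x i))"
    by (simp add: block_strategy_def Let_def)
  moreover have "take (Suc i) (block f m x) @ [(Query (probe x i), probe x i, f (probe x i))]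
                   = take (Suc (Suc i)) (block f m x)"
    using i by (simp add: take_Suc_conv_app_nth block_def)
  ultimately have "run_tester (block_strategy m) D f (Suc d + s) ?h
      = run_tester (block_strategy m) D f (d + s) (h @ take (Suc (Suc i)) (block f m x))"
    by (simp add: bind_return_pmf)
  also have "\<dots> = run_tester (block_strategy m) D f s (h @ block f m x)"
    using Suc.IH[of "Suc i"] Suc.prems by simp
  finally show ?case .
qed

lemma run_tester_block:
  assumes "length h mod (2*m+1) = 0"
  shows "run_tester (block_strategy m) D f (2*m+1+s) h
           = bind_pmf D (\<lambda>x. run_tester (block_strategy m) D f s (h @ block f m x))"
proof -
  have "block_strategy m h = return_pmf Sample" using assms by (simp add: block_strategy_def)
  then have "run_tester (block_strategy m) D f (2*m+1+s) h
      = bind_pmf D (\<lambda>x. run_tester (block_strategy m) D f (2*m+s) (h @ [(Sample, x, f x)]))"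
    by (simp add: bind_return_pmf)
  also have "\<dots> = bind_pmf D (\<lambda>x. run_tester (block_strategy m) D f s (h @ block f m x))"
    using run_tester_block_suffix[OF assms, of 0 "2*m"] by (simp add: block_def)
  finally show ?thesis .
qed

lemma emeasure_consistent_run_le_power:
  assumes G: "\<forall>x\<in>set_pmf D. x \<notin> G \<longrightarrow> (\<forall>h0 t. \<not> consistent_history n l u (h0 @ block f m x @ t))"
    and "length h mod (2*m+1) = 0"
  shows "emeasure (run_tester (block_strategy m) D f (k * (2*m+1)) h) {h'. consistent_history n l u h'}
           \<le> emeasure D G ^ k"
  using assms(2)
proof (induction k arbitrary: h)
  case 0
  then show ?case by (simp add: indicator_def)
next
  case (Suc k)
  let ?run = "\<lambda>x. run_tester (block_strategy m) D f (k * (2*m+1)) (h @ block f m x)"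
  let ?C = "{h'. consistent_history n l u h'}"
  have blocks: "Suc k * (2*m+1) = 2*m+1 + k * (2*m+1)" by simp
  have "emeasure (run_tester (block_strategy m) D f (Suc k * (2*m+1)) h) ?C
      = (\<integral>\<^sup>+x. emeasure (?run x) ?C \<partial>D)"
    unfolding blocks run_tester_block[OF Suc.prems] by simp
  also have "\<dots> \<le> (\<integral>\<^sup>+x. emeasure D G ^ k * indicator G x \<partial>D)"
  proof (rule nn_integral_mono_AE, rule AE_pmfI)
    fix x assume x: "x \<in> set_pmf D"
    show "emeasure (?run x) ?C \<le> emeasure D G ^ k * indicator G x"
    proof (cases "x \<in> G")
      case True
      have "length (h @ block f m x) = length h + (2*m+1)" by (simp add: block_def)
      then have "length (h @ block f m x) mod (2*m+1) = 0"
        using Suc.prems by (simp only: mod_add_self2)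
      with Suc.IH True show ?thesis by simp
    next
      case False
      have "set_pmf (?run x) \<inter> ?C = {}"
        using run_tester_extends[of _ "block_strategy m" D f] G x False by fastforce
      then have "measure_pmf.prob (?run x) ?C = 0" by (simp add: measure_pmf_zero_iff)
      then show ?thesis by (simp add: measure_pmf.emeasure_eq_measure)
    qed
  qed
  also have "\<dots> = emeasure D G ^ k * emeasure D G" by (rule nn_integral_cmult_indicator) simp
  also have "\<dots> = emeasure D G ^ Suc k" by (simp add: mult.commute)
  finally show ?case .
qed

section \<open>Completeness and soundness\<close>

lemma block_tester_accepts_property:
  assumes "in_prop n (bounded_derivative_property n l u) f"
  shows "accept_prob (block_tester n l u m k) D f = 1"
proof -
  obtain g where g: "g \<in> bounded_derivative_property n l u" "\<forall>x\<in>{1..n}. f x = g x"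
    using assms unfolding in_prop_def by blast
  have "consistent_history n l u h"
    if "h \<in> set_pmf (run_tester (block_strategy m) D f (k * (2*m+1)) [])" for h
  proof -
    have recorded: "\<forall>(a, x, v)\<in>set h. v = f x" using run_tester_extends[OF that] by auto
    show ?thesis
      unfolding consistent_history_def
    proof clarify
      fix a x v b y w
      assume "(a, x, v) \<in> set h" "(b, y, w) \<in> set h" "x \<in> {1..n}" "y \<in> {1..n}" "x < y"
      moreover from recorded \<open>(a, x, v) \<in> set h\<close> \<open>(b, y, w) \<in> set h\<close>
      have "v = f x" "w = f y" by auto
      ultimately show "compatible l u x v y w"
        using g(2) bounded_derivative_property_compatible[OF g(1), of x y] by simp
    qed
  qed
  then show ?thesis
    by (simp add: accept_prob_block_tester measure_pmf.prob_eq_1 AE_measure_pmf_iff)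
qed

definition good_points :: "nat \<Rightarrow> (nat \<Rightarrow> real) \<Rightarrow> (nat \<Rightarrow> real) \<Rightarrow> (nat \<Rightarrow> real) \<Rightarrow> nat \<Rightarrow> nat set" where
  "good_points n l u f m = {x\<in>{1..n}. \<forall>i<2*m. probe x i \<in> {1..n} \<longrightarrow>
      (x < probe x i \<longrightarrow> compatible l u x (f x) (probe x i) (f (probe x i))) \<and>
      (probe x i < x \<longrightarrow> compatible l u (probe x i) (f (probe x i)) x (f x))}"

lemma good_points_subset: "good_points n l u f m \<subseteq> {1..n}"
  unfolding good_points_def by blast

lemma consistent_historyD:
  assumes "consistent_history n l u h" "(a, x, v) \<in> set h" "(b, y, w) \<in> set h"
    and "x \<in> {1..n}" "y \<in> {1..n}" "x < y"
  shows "compatible l u x v y w"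
  using assms unfolding consistent_history_def by fastforce

lemma inconsistent_block_outside_good_points:
  assumes "x \<in> {1..n}" "x \<notin> good_points n l u f m"
  shows "\<not> consistent_history n l u (h0 @ block f m x @ t)"
proof
  assume consistent: "consistent_history n l u (h0 @ block f m x @ t)"
  obtain i where i: "i < 2*m" "probe x i \<in> {1..n}"
    "\<not> ((x < probe x i \<longrightarrow> compatible l u x (f x) (probe x i) (f (probe x i))) \<and>
         (probe x i < x \<longrightarrow> compatible l u (probe x i) (f (probe x i)) x (f x)))"
    using assms unfolding good_points_def by blast
  have sample: "(Sample, x, f x) \<in> set (h0 @ block f m x @ t)"
    and query: "(Query (probe x i), probe x i, f (probe x i)) \<in> set (h0 @ block f m x @ t)"
    using i(1) by (auto simp: block_def)
  have "compatible l u x (f x) (probe x i) (f (probe x i))" if "x < probe x i"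
    using consistent_historyD[OF consistent sample query assms(1) i(2) that] .
  moreover have "compatible l u (probe x i) (f (probe x i)) x (f x)" if "probe x i < x"
    using consistent_historyD[OF consistent query sample i(2) assms(1) that] .
  ultimately show False using i(3) by blast
qed

lemma good_points_compatible:
  assumes "n < 2^m" "x \<in> good_points n l u f m" "y \<in> good_points n l u f m" "x < y"
  shows "compatible l u x (f x) y (f y)"
proof -
  have "1 \<le> x" "y \<le> n"
    using subsetD[OF good_points_subset assms(2)] subsetD[OF good_points_subset assms(3)] by simp_all
  obtain j where j: "j < m" "dyadic_above j x = dyadic_below j y"
    using dyadic_above_eq_dyadic_below[of x y m] assms(1,4) \<open>y \<le> n\<close> by auto
  define z where "z = dyadic_above j x"
  have "x < z" "z \<le> y"
    using less_dyadic_above[of x j] dyadic_below_le[of j y] j(2) unfolding z_def by simp_all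
  have z: "z \<in> {1..n}" using \<open>x < z\<close> \<open>z \<le> y\<close> \<open>y \<le> n\<close> by simp
  have px: "probe x (2*j+1) = z" and py: "probe y (2*j) = z"
    using j(2) by (simp_all add: probe_def z_def)
  have "\<And>i. i < 2*m \<Longrightarrow> probe x i \<in> {1..n} \<Longrightarrow> x < probe x i \<Longrightarrow>
      compatible l u x (f x) (probe x i) (f (probe x i))"
    and "\<And>i. i < 2*m \<Longrightarrow> probe y i \<in> {1..n} \<Longrightarrow> probe y i < y \<Longrightarrow>
      compatible l u (probe y i) (f (probe y i)) y (f y)"
    using assms(2,3) unfolding good_points_def by blast+
  from this(1)[of "2*j+1"] this(2)[of "2*j"] j(1) px py z \<open>x < z\<close>
  have xz: "compatible l u x (f x) z (f z)" and zy: "z < y \<Longrightarrow> compatible l u z (f z) y (f y)"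
    by simp_all
  show ?thesis
  proof (cases "z = y")
    case True
    with xz show ?thesis by simp
  next
    case False
    with \<open>z \<le> y\<close> zy have "compatible l u z (f z) y (f y)" by simp
    with \<open>x < z\<close> \<open>z \<le> y\<close> xz show ?thesis by (meson compatible_trans less_imp_le)
  qed
qed

lemma block_tester_rejects_far:
  assumes "\<forall>t\<in>{1..n-1}. l t \<le> u t" "n < 2^m" "set_pmf D \<subseteq> {1..n}"
    and far: "far_from D (bounded_derivative_property n l u) eps f"
  shows "accept_prob (block_tester n l u m k) D f \<le> (1 - eps) ^ k"
proof -
  let ?G = "good_points n l u f m"
  have "finite ?G" by (rule finite_subset[OF good_points_subset]) simp
  moreover have "\<forall>x\<in>?G. \<forall>y\<in>?G. x < y \<longrightarrow> compatible l u x (f x) y (f y)"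
    using good_points_compatible[OF assms(2)] by blast
  ultimately obtain g where "g \<in> bounded_derivative_property n l u" "\<forall>x\<in>?G. f x = g x"
    using bounded_derivative_property_extension[OF _ good_points_subset assms(1)] by blast
  with far have "eps < measure_pmf.prob D {x. f x \<noteq> g x}" unfolding far_from_def by blast
  also have "\<dots> \<le> measure_pmf.prob D (UNIV - ?G)"
    using \<open>\<forall>x\<in>?G. f x = g x\<close> by (intro measure_pmf.finite_measure_mono) auto
  also have "\<dots> = 1 - measure_pmf.prob D ?G" using measure_pmf.prob_compl[of ?G D] by simp
  finally have G_small: "measure_pmf.prob D ?G \<le> 1 - eps" by simp
  have "\<forall>x\<in>set_pmf D. x \<notin> ?G \<longrightarrow> (\<forall>h0 t. \<not> consistent_history n l u (h0 @ block f m x @ t))"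
    using inconsistent_block_outside_good_points assms(3) by blast
  from emeasure_consistent_run_le_power[OF this, of "[]" k]
  have "accept_prob (block_tester n l u m k) D f \<le> measure_pmf.prob D ?G ^ k"
    by (simp add: accept_prob_block_tester measure_pmf.emeasure_eq_measure ennreal_power)
  also have "\<dots> \<le> (1 - eps) ^ k" using G_small by (intro power_mono) simp_all
  finally show ?thesis .
qed

lemma far_from_bounded_derivative_property_nontrivial:
  assumes "0 \<le> eps" "\<forall>t\<in>{1..n-1}. l t \<le> u t" "far_from D (bounded_derivative_property n l u) eps f"
  shows "eps < 1" "2 \<le> n"
proof -
  obtain g where "g \<in> bounded_derivative_property n l u"
    using bounded_derivative_property_extension[of "{}" n l u] assms(2) by auto
  with assms(3) have "eps < measure_pmf.prob D {x. f x \<noteq> g x}" unfolding far_from_def by blast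
  then show "eps < 1" using measure_pmf.prob_le_1[of D "{x. f x \<noteq> g x}"] by linarith
  show "2 \<le> n"
  proof (rule ccontr)
    assume "\<not> 2 \<le> n"
    then have "f \<in> bounded_derivative_property n l u"
      unfolding bounded_derivative_property_def by auto
    with assms(3) have "eps < measure_pmf.prob D {x. f x \<noteq> f x}" unfolding far_from_def by blast
    with assms(1) show False by simp
  qed
qed

section \<open>Counting\<close>

lemma one_minus_power_ceiling_less:
  fixes eps :: real
  assumes "0 < eps" "eps < 1"
  shows "(1 - eps) ^ nat \<lceil>3/eps\<rceil> < 1/3"
proof -
  have "3 \<le> eps * r" if "3/eps \<le> r" for r using that assms(1) by (simp add: field_simps)
  then have "3 \<le> eps * nat \<lceil>3/eps\<rceil>" using real_nat_ceiling_ge by blast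
  have "(1 - eps) ^ nat \<lceil>3/eps\<rceil> \<le> exp (-eps) ^ nat \<lceil>3/eps\<rceil>"
    using assms(2) exp_ge_add_one_self[of "-eps"] by (intro power_mono) auto
  also have "\<dots> = exp (- (eps * nat \<lceil>3/eps\<rceil>))"
    by (simp add: exp_of_nat_mult[symmetric] mult.commute)
  also have "\<dots> \<le> exp (-3)" using \<open>3 \<le> eps * nat \<lceil>3/eps\<rceil>\<close> by simp
  also have "\<dots> < 1/3"
    using exp_ge_add_one_self[of 3] by (simp add: exp_minus field_simps)
  finally show ?thesis .
qed

lemma block_tester_query_bound:
  fixes eps :: real
  assumes "0 < eps" "eps < 1" "2 \<le> n"
  shows "real (nat \<lceil>3/eps\<rceil> * (2 * floorlog 2 n + 1)) \<le> 24 / eps * log 2 (real n)"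
proof -
  have log_ge_1: "1 \<le> log 2 (real n)" using le_log_of_power[of 2 1 "real n"] assms(3) by simp
  have "real (floorlog 2 n) \<le> log 2 (real n) + 1"
    using assms(3) by (simp add: floorlog_def)
  then have blocks: "real (2 * floorlog 2 n + 1) \<le> 5 * log 2 (real n)" using log_ge_1 by simp
  have "real (nat \<lceil>3/eps\<rceil>) \<le> 3/eps + 1"
    using of_int_ceiling_le_add_one[of "3/eps"] assms(1) by simp
  also have "\<dots> \<le> 4/eps" using assms(1,2) by (simp add: field_simps)
  finally have rounds: "real (nat \<lceil>3/eps\<rceil>) \<le> 4/eps" .
  have "real (nat \<lceil>3/eps\<rceil> * (2 * floorlog 2 n + 1)) \<le> 4/eps * (5 * log 2 (real n))"
    unfolding of_nat_mult by (rule mult_mono[OF rounds blocks]) (use assms(1) in auto)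
  also have "\<dots> \<le> 24 / eps * log 2 (real n)" using assms(1) log_ge_1 by (simp add: field_simps)
  finally show ?thesis .
qed

theorem theorem4p4:
  fixes eps :: real and n :: nat and l u :: "nat \<Rightarrow> real"
  assumes "eps > 0"
    and "\<forall>t\<in>{1..n-1}. l t < u t"
  shows "\<exists>T. is_df_tester n (bounded_derivative_property n l u) eps T \<and>
             real (num_queries T) \<le> 24 / eps * log 2 (real n)"
proof -
  have lu: "\<forall>t\<in>{1..n-1}. l t \<le> u t" using assms(2) by (simp add: less_imp_le)
  define m where "m = floorlog 2 n"
  have "n < 2^m" unfolding m_def by (cases "n = 0") (simp_all add: floorlog_bounds)
  define k where "k = (if eps < 1 \<and> 2 \<le> n then nat \<lceil>3/eps\<rceil> else 0)"
  define T where "T = block_tester n l u m k"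
  have "is_df_tester n (bounded_derivative_property n l u) eps T"
    unfolding is_df_tester_def T_def
  proof (intro allI impI conjI)
    fix D f assume "set_pmf D \<subseteq> {1..n}"
    show "accept_prob (block_tester n l u m k) D f > 2/3"
      if "in_prop n (bounded_derivative_property n l u) f"
      using block_tester_accepts_property[OF that] by simp
    show "1 - accept_prob (block_tester n l u m k) D f > 2/3"
      if far: "far_from D (bounded_derivative_property n l u) eps f"
      using block_tester_rejects_far[OF lu \<open>n < 2^m\<close> \<open>set_pmf D \<subseteq> _\<close> far, of k]
        far_from_bounded_derivative_property_nontrivial[OF less_imp_le[OF assms(1)] lu far]
        one_minus_power_ceiling_less[OF assms(1)] by (simp add: k_def)
  qed
  moreover have "real (num_queries T) \<le> 24 / eps * log 2 (real n)"
  proof (cases "eps < 1 \<and> 2 \<le> n")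
    case True
    then show ?thesis
      using block_tester_query_bound[OF assms(1)] by (simp add: T_def block_tester_def k_def m_def)
  next
    case False
    then have "k = 0" unfolding k_def by (rule if_not_P)
    moreover have "0 \<le> log 2 (real n)" by (cases "n = 0") (auto simp: log_def)
    ultimately show ?thesis using assms(1) by (simp add: T_def block_tester_def)
  qed
  ultimately show ?thesis by blast
qed

end
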